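(* Every term $P$ over $\Sigma_m$ is provably equal, from $\mathrm{Md}$ in equational logic, to a Standard Meadow Form whose variables are among the variables of $P$.
   Context: The signature of meadows is $\Sigma_m=(0,1,+,\cdot,-,{}^{-1})$. $\mathrm{Md}$ is the set of equations: $(x+y)+z=x+(y+z)$, $x+y=y+x$, $x+0=x$, $x+(-x)=0$, $(x\cdot y)\cdot z=x\cdot(y\cdot z)$, $x\cdot y=y\cdot x$, $1\cdot x=x$, $x\cdot(y+z)=x\cdot y+x\cdot z$, $(x^{-1})^{-1}=x$, $x\cdot(x\cdot x^{-1})=x$. Notation: $t/u$ abbreviates $t\cdot u^{-1}$; $1_t$ abbreviates $t\cdot t^{-1}$ and $0_t$ abbreviates $1-1_t$. A polynomial is a $\Sigma_m$-term not containing ${}^{-1}$. SMFs of level $n$: an SMF of level $0$ is any term $s/t$ with $s,t$ polynomials; an SMF of level $n+1$ is any term $0_t\cdot P+1_t\cdot Q$ with $t$ a polynomial and $P,Q$ SMFs of level $n$. A Standard Meadow Form (SMF) is an SMF of some level. *)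

theory Defs
  imports Main
begin

datatype 'v mterm =
    MVar 'v
  | MZero
  | MOne
  | MAdd "'v mterm" "'v mterm"
  | MMul "'v mterm" "'v mterm"
  | MNeg "'v mterm"
  | MInv "'v mterm"

fun mvars :: "'v mterm \<Rightarrow> 'v set" where
  "mvars (MVar x) = {x}"
| "mvars MZero = {}"
| "mvars MOne = {}"
| "mvars (MAdd s t) = mvars s \<union> mvars t"
| "mvars (MMul s t) = mvars s \<union> mvars t"
| "mvars (MNeg s) = mvars s"
| "mvars (MInv s) = mvars s"

fun polynomial :: "'v mterm \<Rightarrow> bool" where
  "polynomial (MVar x) = True"
| "polynomial MZero = True"
| "polynomial MOne = True"
| "polynomial (MAdd s t) = (polynomial s \<and> polynomial t)"
| "polynomial (MMul s t) = (polynomial s \<and> polynomial t)"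
| "polynomial (MNeg s) = polynomial s"
| "polynomial (MInv s) = False"

text \<open>Abbreviations t/u, 1_t, 0_t = 1 - 1_t (binary minus is x + (-y)).\<close>
definition mdiv :: "'v mterm \<Rightarrow> 'v mterm \<Rightarrow> 'v mterm" where
  "mdiv t u = MMul t (MInv u)"

definition one_of :: "'v mterm \<Rightarrow> 'v mterm" where
  "one_of t = MMul t (MInv t)"

definition zero_of :: "'v mterm \<Rightarrow> 'v mterm" where
  "zero_of t = MAdd MOne (MNeg (one_of t))"

text \<open>Equational logic derivability from Md: reflexivity, symmetry, transitivity,
  congruence for all operations, and all substitution instances of the axioms of Md.\<close>
inductive md_eq :: "'v mterm \<Rightarrow> 'v mterm \<Rightarrow> bool" where
  refl: "md_eq t t"
| sym: "md_eq s t \<Longrightarrow> md_eq t s"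
| trans: "md_eq s t \<Longrightarrow> md_eq t u \<Longrightarrow> md_eq s u"
| cong_add: "md_eq s1 t1 \<Longrightarrow> md_eq s2 t2 \<Longrightarrow> md_eq (MAdd s1 s2) (MAdd t1 t2)"
| cong_mul: "md_eq s1 t1 \<Longrightarrow> md_eq s2 t2 \<Longrightarrow> md_eq (MMul s1 s2) (MMul t1 t2)"
| cong_neg: "md_eq s t \<Longrightarrow> md_eq (MNeg s) (MNeg t)"
| cong_inv: "md_eq s t \<Longrightarrow> md_eq (MInv s) (MInv t)"
| add_assoc: "md_eq (MAdd (MAdd x y) z) (MAdd x (MAdd y z))"
| add_comm: "md_eq (MAdd x y) (MAdd y x)"
| add_zero: "md_eq (MAdd x MZero) x"
| add_neg: "md_eq (MAdd x (MNeg x)) MZero"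
| mul_assoc: "md_eq (MMul (MMul x y) z) (MMul x (MMul y z))"
| mul_comm: "md_eq (MMul x y) (MMul y x)"
| mul_one: "md_eq (MMul MOne x) x"
| distrib: "md_eq (MMul x (MAdd y z)) (MAdd (MMul x y) (MMul x z))"
| inv_inv: "md_eq (MInv (MInv x)) x"
| ril: "md_eq (MMul x (MMul x (MInv x))) x"

fun smf_level :: "nat \<Rightarrow> 'v mterm \<Rightarrow> bool" where
  "smf_level 0 P = (\<exists>s t. polynomial s \<and> polynomial t \<and> P = mdiv s t)"
| "smf_level (Suc n) P = (\<exists>t A B. polynomial t \<and> smf_level n A \<and> smf_level n B \<and>
       P = MAdd (MMul (zero_of t) A) (MMul (one_of t) B))"

definition SMF :: "'v mterm \<Rightarrow> bool" where
  "SMF P = (\<exists>n. smf_level n P)"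

end

theory Submission imports Defs begin

(*
  Md-provable equality is a congruence, so the quotient of the term algebra
  by it is the free meadow over the variables; two terms are Md-equal iff their images
  there coincide.  It therefore suffices to show that the value of every term P in the
  free meadow is the value of some SMF over the variables of P.

  After building the free meadow,
  the set of SMF-representable values is shown to contain all leaves and to be closed
  under SMF nodes (padding the shallower branch to equal depth).  A single lemma then
  pushes any operation commuting with conditionals through an SMF by induction on its
  level; instantiating it yields closure under -, ^-1, * and +, and the theorem follows
  by structural induction on P.
*)

section \<open>Meadows\<close>

text \<open>Ring identity behind the addition of fractions: S lives on the idempotent e and
  U on the idempotent f, so S + U can be split along e and f.\<close>
lemma (in comm_ring_1) idempotent_split_sum:
  assumes "e * e = e" "f * f = f" "e * S = S" "f * U = U"
  shows "S + U = (1 - e) * ((1 - f) * 0 + f * U) + e * ((1 - f) * S + f * (f * S + e * U))"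
proof -
  have "(1 - e) * ((1 - f) * 0 + f * U) + e * ((1 - f) * S + f * (f * S + e * U))
      = (1 - e) * (f * U) + e * S + e * (f * f - f) * S + (e * e) * (f * U)"
    by (simp add: algebra_simps)
  also have "\<dots> = S + U"
    using assms by (simp add: algebra_simps)
  finally show ?thesis by simp
qed

text \<open>A meadow: a commutative ring with an involutive inverse satisfying reflexivity
  x (x x^-1) = x; division abbreviates multiplication by the inverse.  These are exactly
  the equations of Md.\<close>
class meadow = comm_ring_1 + inverse +
  assumes meadow_inverse_inverse [simp]: "inverse (inverse x) = x"
    and meadow_reflexive_inverse: "x * (x * inverse x) = x"
    and meadow_divide: "x / y = x * inverse y"
begin

lemma meadow_reflexive_inverse': "x * inverse x * inverse x = inverse x"
  using meadow_reflexive_inverse[of "inverse x"] by (simp add: ac_simps)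

lemma meadow_inverse_unique:
  assumes "x * x * a = x" and "x * a * a = a"
  shows "inverse x = a"
proof -
  have unique: "a = b" if "x * x * a = x" "x * a * a = a" "x * x * b = x" "x * b * b = b"
    for a b
  proof -
    have "x * a = x * b * (x * a)" using that by (metis mult.assoc mult.commute)
    moreover have "x * b = x * a * (x * b)" using that by (metis mult.assoc mult.commute)
    ultimately have xa_xb: "x * a = x * b" by (simp add: mult.commute)
    have "a = x * a * a" using that by simp
    also have "\<dots> = x * b * a" using xa_xb by simp
    also have "\<dots> = b * (x * a)" by (simp add: ac_simps)
    also have "\<dots> = b * (x * b)" using xa_xb by simp
    also have "\<dots> = b" using that by (simp add: ac_simps)
    finally show ?thesis .
  qed
  have "x * x * inverse x = x"
    using meadow_reflexive_inverse by (simp add: mult.assoc)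
  from unique[OF this meadow_reflexive_inverse' assms] show ?thesis .
qed

lemma meadow_inverse_mult: "inverse (x * y) = inverse x * inverse y"
  using meadow_reflexive_inverse[of x] meadow_reflexive_inverse[of y]
    meadow_reflexive_inverse'[of x] meadow_reflexive_inverse'[of y]
  by (intro meadow_inverse_unique) (metis mult.assoc mult.commute)+

lemma meadow_divide_one [simp]: "x / 1 = x"
  using meadow_reflexive_inverse[of 1] by (simp add: meadow_divide)

lemma meadow_one_idem: "x * inverse x * (x * inverse x) = x * inverse x"
  using meadow_reflexive_inverse'[of x] by (metis mult.assoc mult.commute)

lemma meadow_one_divide: "x * inverse x * (y / x) = y / x"
  using meadow_reflexive_inverse'[of x] by (simp add: meadow_divide ac_simps)

text \<open>The value of an SMF node 0_x a + 1_x b; it behaves like "if x = 0 then a else b".\<close>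
definition meadow_if :: "'a \<Rightarrow> 'a \<Rightarrow> 'a \<Rightarrow> 'a" where
  "meadow_if x a b = (1 - x * inverse x) * a + x * inverse x * b"

lemma meadow_if_same [simp]: "meadow_if x a a = a"
  by (simp add: meadow_if_def algebra_simps)

text \<open>Conditionals multiply branchwise, since 1_x is idempotent.\<close>
lemma meadow_if_mult: "meadow_if x a b * meadow_if x c d = meadow_if x (a * c) (b * d)"
proof -
  let ?e = "x * inverse x"
  have "meadow_if x a b * meadow_if x c d
      = meadow_if x (a * c) (b * d) + (?e * ?e - ?e) * (a * c - a * d - b * c + b * d)"
    by (simp add: meadow_if_def algebra_simps)
  then show ?thesis by (simp add: meadow_one_idem)
qed

lemma meadow_inverse_if: "inverse (meadow_if x a b) = meadow_if x (inverse a) (inverse b)"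
proof (rule meadow_inverse_unique)
  have ril: "y * y * inverse y = y" and ril': "y * inverse y * inverse y = inverse y" for y
    using meadow_reflexive_inverse[of y] meadow_reflexive_inverse'[of y] by (simp_all add: mult.assoc)
  show "meadow_if x a b * meadow_if x a b * meadow_if x (inverse a) (inverse b) = meadow_if x a b"
    by (simp add: meadow_if_mult ril)
  show "meadow_if x a b * meadow_if x (inverse a) (inverse b) * meadow_if x (inverse a) (inverse b)
      = meadow_if x (inverse a) (inverse b)"
    by (simp add: meadow_if_mult ril')
qed

text \<open>Sum of two fractions as a nested conditional of fractions: the case split on
  whether the denominators vanish avoids the (false) identity s/t + u/v = (sv + ut)/(tv).\<close>
lemma meadow_divide_add:
  "s / t + u / v = meadow_if t (meadow_if v 0 (u / v)) (meadow_if v (s / t) ((s * v + u * t) / (t * v)))"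
proof -
  let ?e = "t * inverse t" and ?f = "v * inverse v" and ?S = "s / t" and ?U = "u / v"
  have sum: "(s * v + u * t) / (t * v) = ?f * ?S + ?e * ?U"
    by (simp add: meadow_divide meadow_inverse_mult algebra_simps)
  have "?e * ?e = ?e" "?f * ?f = ?f" "?e * ?S = ?S" "?f * ?U = ?U"
    by (simp_all only: meadow_one_idem meadow_one_divide)
  then have "?S + ?U = meadow_if t (meadow_if v 0 ?U) (meadow_if v ?S (?f * ?S + ?e * ?U))"
    unfolding meadow_if_def by (rule idempotent_split_sum)
  then show ?thesis using sum by simp
qed

end

section \<open>The free meadow\<close>

text \<open>Interpretation in the two-element field (where x^-1 = x), sending variables to 0.
  Md is sound for it, so Md does not prove 0 = 1.\<close>
fun eval_two :: "'v mterm \<Rightarrow> bool" where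
  "eval_two (MVar x) = False"
| "eval_two MZero = False"
| "eval_two MOne = True"
| "eval_two (MAdd s t) = (eval_two s \<noteq> eval_two t)"
| "eval_two (MMul s t) = (eval_two s \<and> eval_two t)"
| "eval_two (MNeg s) = eval_two s"
| "eval_two (MInv s) = eval_two s"

lemma md_eq_eval_two: "md_eq s t \<Longrightarrow> eval_two s = eval_two t"
  by (induction rule: md_eq.induct) auto

lemma equivp_md_eq: "equivp md_eq"
  by (intro equivpI reflpI sympI transpI) (auto intro: md_eq.intros)

quotient_type 'v free_meadow = "'v mterm" / md_eq
  by (rule equivp_md_eq)

text \<open>The operations respect Md-equality by the congruence rules, and the ring axioms of
  Md hold in the quotient; it is nontrivial by the two-element interpretation.\<close>
instantiation free_meadow :: (type) "{comm_ring_1, inverse}"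
begin

lift_definition zero_free_meadow :: "'a free_meadow" is MZero .
lift_definition one_free_meadow :: "'a free_meadow" is MOne .
lift_definition plus_free_meadow :: "'a free_meadow \<Rightarrow> 'a free_meadow \<Rightarrow> 'a free_meadow"
  is MAdd by (rule md_eq.cong_add)
lift_definition times_free_meadow :: "'a free_meadow \<Rightarrow> 'a free_meadow \<Rightarrow> 'a free_meadow"
  is MMul by (rule md_eq.cong_mul)
lift_definition uminus_free_meadow :: "'a free_meadow \<Rightarrow> 'a free_meadow"
  is MNeg by (rule md_eq.cong_neg)
lift_definition inverse_free_meadow :: "'a free_meadow \<Rightarrow> 'a free_meadow"
  is MInv by (rule md_eq.cong_inv)
definition minus_free_meadow :: "'a free_meadow \<Rightarrow> 'a free_meadow \<Rightarrow> 'a free_meadow"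
  where "minus_free_meadow a b = a + - b"
definition divide_free_meadow :: "'a free_meadow \<Rightarrow> 'a free_meadow \<Rightarrow> 'a free_meadow"
  where "divide_free_meadow a b = a * inverse b"

instance
proof
  fix a b c :: "'a free_meadow"
  show "a + b + c = a + (b + c)" by transfer (rule md_eq.add_assoc)
  show "a + b = b + a" by transfer (rule md_eq.add_comm)
  show "0 + a = a" by transfer (meson md_eq.add_comm md_eq.add_zero md_eq.trans)
  show "- a + a = 0" by transfer (meson md_eq.add_comm md_eq.add_neg md_eq.trans)
  show "a - b = a + - b" by (simp add: minus_free_meadow_def)
  show "a * b * c = a * (b * c)" by transfer (rule md_eq.mul_assoc)
  show "a * b = b * a" by transfer (rule md_eq.mul_comm)
  show "1 * a = a" by transfer (rule md_eq.mul_one)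
  show "(a + b) * c = a * c + b * c" by transfer
      (meson md_eq.mul_comm md_eq.distrib md_eq.trans md_eq.cong_add)
  show "(0::'a free_meadow) \<noteq> 1" by transfer (auto dest: md_eq_eval_two)
qed

end

instance free_meadow :: (type) meadow
proof
  fix a b :: "'a free_meadow"
  show "inverse (inverse a) = a" by transfer (rule md_eq.inv_inv)
  show "a * (a * inverse a) = a" by transfer (rule md_eq.ril)
  show "a / b = a * inverse b" by (simp add: divide_free_meadow_def)
qed

definition ev :: "'v mterm \<Rightarrow> 'v free_meadow" where
  "ev = abs_free_meadow"

lemma md_eq_iff_ev: "md_eq a b \<longleftrightarrow> ev a = ev b"
  by (simp add: ev_def free_meadow.abs_eq_iff)

lemma ev_simps [simp]:
  "ev MZero = 0" "ev MOne = 1" "ev (MAdd a b) = ev a + ev b" "ev (MMul a b) = ev a * ev b"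
  "ev (MNeg a) = - ev a" "ev (MInv a) = inverse (ev a)"
  by (simp_all add: ev_def zero_free_meadow_def one_free_meadow_def plus_free_meadow.abs_eq
      times_free_meadow.abs_eq uminus_free_meadow.abs_eq inverse_free_meadow.abs_eq)

lemma ev_mdiv [simp]: "ev (mdiv s t) = ev s / ev t"
  by (simp add: mdiv_def meadow_divide)

definition node :: "'v mterm \<Rightarrow> 'v mterm \<Rightarrow> 'v mterm \<Rightarrow> 'v mterm" where
  "node t A B = MAdd (MMul (zero_of t) A) (MMul (one_of t) B)"

lemma ev_node [simp]: "ev (node t A B) = meadow_if (ev t) (ev A) (ev B)"
  by (simp add: node_def zero_of_def one_of_def meadow_if_def)

lemma mvars_node [simp]: "mvars (node t A B) = mvars t \<union> mvars A \<union> mvars B"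
  by (auto simp: node_def zero_of_def one_of_def)

lemma mvars_mdiv [simp]: "mvars (mdiv s t) = mvars s \<union> mvars t"
  by (simp add: mdiv_def)

section \<open>Values representable by Standard Meadow Forms\<close>

definition smf_repr :: "'v set \<Rightarrow> 'v free_meadow \<Rightarrow> bool" where
  "smf_repr V a \<longleftrightarrow> (\<exists>Q. SMF Q \<and> mvars Q \<subseteq> V \<and> ev Q = a)"

lemma smf_repr_mono: "smf_repr V a \<Longrightarrow> V \<subseteq> W \<Longrightarrow> smf_repr W a"
  unfolding smf_repr_def by blast

lemma smf_repr_leaf:
  "polynomial s \<Longrightarrow> polynomial t \<Longrightarrow> smf_repr (mvars s \<union> mvars t) (ev s / ev t)"
  unfolding smf_repr_def SMF_def
  by (intro exI[of _ "mdiv s t"] conjI exI[of _ 0]) auto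

lemma smf_level_node:
  "polynomial t \<Longrightarrow> smf_level n A \<Longrightarrow> smf_level n B \<Longrightarrow> smf_level (Suc n) (node t A B)"
  unfolding smf_level.simps node_def by blast

text \<open>An SMF can be padded to any higher level, using the trivial node 0_0 Q + 1_0 Q.\<close>
lemma smf_level_raise:
  assumes "smf_level n P" and "n \<le> m"
  shows "\<exists>Q. smf_level m Q \<and> mvars Q \<subseteq> mvars P \<and> ev Q = ev P"
  using assms(2)
proof (induction m rule: dec_induct)
  case base
  show ?case using assms(1) by blast
next
  case (step m)
  then obtain Q where Q: "smf_level m Q" "mvars Q \<subseteq> mvars P" "ev Q = ev P"
    by blast
  have "smf_level (Suc m) (node MZero Q Q)"
    using Q(1) by (intro smf_level_node) auto
  with Q show ?case
    by (intro exI[of _ "node MZero Q Q"]) auto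
qed

text \<open>Representable values are closed under conditionals on a polynomial; the two
  branches are first brought to a common level.\<close>
lemma smf_repr_node:
  assumes "polynomial t" and "smf_repr V a" and "smf_repr W b"
  shows "smf_repr (mvars t \<union> V \<union> W) (meadow_if (ev t) a b)"
proof -
  obtain A B na nb where A: "smf_level na A" "mvars A \<subseteq> V" "ev A = a"
    and B: "smf_level nb B" "mvars B \<subseteq> W" "ev B = b"
    using assms(2,3) unfolding smf_repr_def SMF_def by blast
  obtain A' where A': "smf_level (max na nb) A'" "mvars A' \<subseteq> mvars A" "ev A' = ev A"
    using smf_level_raise[OF A(1), of "max na nb"] by auto
  obtain B' where B': "smf_level (max na nb) B'" "mvars B' \<subseteq> mvars B" "ev B' = ev B"
    using smf_level_raise[OF B(1), of "max na nb"] by auto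
  have level: "smf_level (Suc (max na nb)) (node t A' B')"
    using assms(1) A'(1) B'(1) by (rule smf_level_node)
  show ?thesis
    unfolding smf_repr_def SMF_def using A A' B B'
    by (intro exI[of _ "node t A' B'"] conjI exI[of _ "Suc (max na nb)"] level) auto
qed

lemma smf_repr_map:
  assumes if_comm: "\<And>x a b. F (meadow_if x a b) = meadow_if x (F a) (F b)"
    and leaf: "\<And>s t. polynomial s \<Longrightarrow> polynomial t \<Longrightarrow>
                 smf_repr (mvars s \<union> mvars t \<union> V) (F (ev s / ev t))"
    and "smf_repr W a"
  shows "smf_repr (W \<union> V) (F a)"
proof -
  have level: "smf_repr (mvars Q \<union> V) (F (ev Q))" if "smf_level n Q" for n Q
    using that
  proof (induction n arbitrary: Q)
    case 0
    then obtain s t where "polynomial s" "polynomial t" "Q = mdiv s t" by auto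
    then show ?case using leaf by simp
  next
    case (Suc n)
    then obtain t A B where t: "polynomial t" and Q: "Q = node t A B"
      and "smf_level n A" "smf_level n B"
      unfolding node_def by auto
    with Suc.IH have "smf_repr (mvars A \<union> V) (F (ev A))" "smf_repr (mvars B \<union> V) (F (ev B))"
      by blast+
    from smf_repr_node[OF t this] show ?case
      unfolding Q ev_node if_comm by (rule smf_repr_mono) auto
  qed
  from \<open>smf_repr W a\<close> obtain n Q where "smf_level n Q" "mvars Q \<subseteq> W" "ev Q = a"
    unfolding smf_repr_def SMF_def by blast
  with level show ?thesis
    by (metis Un_mono order_refl smf_repr_mono)
qed

lemma smf_repr_binop:
  fixes f :: "'v free_meadow \<Rightarrow> 'v free_meadow \<Rightarrow> 'v free_meadow"
  assumes left: "\<And>x a b c. f (meadow_if x a b) c = meadow_if x (f a c) (f b c)"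
    and right: "\<And>x a b c. f c (meadow_if x a b) = meadow_if x (f c a) (f c b)"
    and leaves: "\<And>s t u v. polynomial s \<Longrightarrow> polynomial t \<Longrightarrow> polynomial u \<Longrightarrow> polynomial v \<Longrightarrow>
       smf_repr (mvars s \<union> mvars t \<union> mvars u \<union> mvars v) (f (ev s / ev t) (ev u / ev v))"
    and "smf_repr V a" and "smf_repr W b"
  shows "smf_repr (V \<union> W) (f a b)"
proof (rule smf_repr_map[where F = "\<lambda>a. f a b", OF left _ \<open>smf_repr V a\<close>])
  fix s t :: "'v mterm" assume "polynomial s" "polynomial t"
  have "smf_repr (W \<union> (mvars s \<union> mvars t)) (f (ev s / ev t) b)"
  proof (rule smf_repr_map[where F = "f (ev s / ev t)", OF right _ \<open>smf_repr W b\<close>])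
    fix u v :: "'v mterm" assume "polynomial u" "polynomial v"
    with \<open>polynomial s\<close> \<open>polynomial t\<close> show
      "smf_repr (mvars u \<union> mvars v \<union> (mvars s \<union> mvars t)) (f (ev s / ev t) (ev u / ev v))"
      by (rule smf_repr_mono[OF leaves]) auto
  qed
  then show "smf_repr (mvars s \<union> mvars t \<union> W) (f (ev s / ev t) b)"
    by (rule smf_repr_mono) auto
qed

section \<open>Closure under the meadow operations\<close>

text \<open>Negation commutes with conditionals, and -(s/t) = (-s)/t is again a leaf.\<close>
lemma smf_repr_uminus:
  assumes "smf_repr V a"
  shows "smf_repr V (- a)"
proof -
  have "smf_repr (V \<union> {}) (- a)"
  proof (rule smf_repr_map[where F = uminus, OF _ _ assms])
    show "- meadow_if x a b = meadow_if x (- a) (- b)" for x a b :: "'v free_meadow"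
      by (simp add: meadow_if_def algebra_simps)
    show "smf_repr (mvars s \<union> mvars t \<union> {}) (- (ev s / ev t))"
      if "polynomial s" "polynomial t" for s t
      using smf_repr_leaf[of "MNeg s" t] that by (simp add: meadow_divide)
  qed
  then show ?thesis by simp
qed

text \<open>Inverse commutes with conditionals (meadow_inverse_if), and (s/t)^-1 = t/s.\<close>
lemma smf_repr_inverse:
  assumes "smf_repr V a"
  shows "smf_repr V (inverse a)"
proof -
  have "smf_repr (V \<union> {}) (inverse a)"
  proof (rule smf_repr_map[where F = inverse, OF meadow_inverse_if _ assms])
    show "smf_repr (mvars s \<union> mvars t \<union> {}) (inverse (ev s / ev t))"
      if "polynomial s" "polynomial t" for s t
      using smf_repr_leaf[OF that(2,1)]
      by (simp add: meadow_divide meadow_inverse_mult Un_commute mult.commute)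
  qed
  then show ?thesis by simp
qed

text \<open>For products, (s/t)(u/v) = (su)/(tv) is again a leaf.\<close>
lemma smf_repr_times: "smf_repr V a \<Longrightarrow> smf_repr W b \<Longrightarrow> smf_repr (V \<union> W) (a * b)"
proof (rule smf_repr_binop[where f = times])
  show "meadow_if x a b * c = meadow_if x (a * c) (b * c)"
    and "c * meadow_if x a b = meadow_if x (c * a) (c * b)" for x a b c :: "'a free_meadow"
    by (simp_all add: meadow_if_def algebra_simps)
  show "smf_repr (mvars s \<union> mvars t \<union> mvars u \<union> mvars v) (ev s / ev t * (ev u / ev v))"
    if "polynomial s" "polynomial t" "polynomial u" "polynomial v" for s t u v
    using smf_repr_leaf[of "MMul s u" "MMul t v"] that
    by (auto simp: meadow_divide meadow_inverse_mult ac_simps Un_ac)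
qed

text \<open>For sums, two leaves combine into a tree of depth two (see meadow_divide_add).\<close>
lemma smf_repr_plus: "smf_repr V a \<Longrightarrow> smf_repr W b \<Longrightarrow> smf_repr (V \<union> W) (a + b)"
proof (rule smf_repr_binop[where f = plus])
  show "meadow_if x a b + c = meadow_if x (a + c) (b + c)"
    and "c + meadow_if x a b = meadow_if x (c + a) (c + b)" for x a b c :: "'a free_meadow"
    by (simp_all add: meadow_if_def algebra_simps)
  fix s t u v :: "'v mterm"
  assume polys: "polynomial s" "polynomial t" "polynomial u" "polynomial v"
  let ?V = "mvars s \<union> mvars t \<union> mvars u \<union> mvars v"
  have zero: "smf_repr {} 0"
    using smf_repr_leaf[of MZero MOne] by simp
  have "smf_repr (mvars (MAdd (MMul s v) (MMul u t)) \<union> mvars (MMul t v))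
      (ev (MAdd (MMul s v) (MMul u t)) / ev (MMul t v))"
    by (rule smf_repr_leaf) (simp_all add: polys)
  then have "smf_repr ?V (ev (MAdd (MMul s v) (MMul u t)) / ev (MMul t v))"
    by (rule smf_repr_mono) auto
  then have cross: "smf_repr ?V ((ev s * ev v + ev u * ev t) / (ev t * ev v))"
    by simp
  have "smf_repr (mvars v \<union> {} \<union> (mvars u \<union> mvars v)) (meadow_if (ev v) 0 (ev u / ev v))"
    by (rule smf_repr_node[OF polys(4) zero smf_repr_leaf[OF polys(3,4)]])
  then have "smf_repr ?V (meadow_if (ev v) 0 (ev u / ev v))"
    by (rule smf_repr_mono) auto
  moreover have "smf_repr ?V
      (meadow_if (ev v) (ev s / ev t) ((ev s * ev v + ev u * ev t) / (ev t * ev v)))"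
    using smf_repr_node[OF polys(4) smf_repr_leaf[OF polys(1,2)] cross]
    by (rule smf_repr_mono) auto
  ultimately have "smf_repr (mvars t \<union> ?V \<union> ?V) (meadow_if (ev t)
      (meadow_if (ev v) 0 (ev u / ev v))
      (meadow_if (ev v) (ev s / ev t) ((ev s * ev v + ev u * ev t) / (ev t * ev v))))"
    by (rule smf_repr_node[OF polys(2)])
  then show "smf_repr ?V (ev s / ev t + ev u / ev v)"
    unfolding meadow_divide_add by (rule smf_repr_mono) auto
qed

lemma smf_repr_ev: "smf_repr (mvars P) (ev P)"
proof (induction P)
  case (MVar x)
  show ?case using smf_repr_leaf[of "MVar x" MOne] by simp
next
  case MZero
  show ?case using smf_repr_leaf[of MZero MOne] by simp
next
  case MOne
  show ?case using smf_repr_leaf[of MOne MOne] by simp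
qed (auto intro: smf_repr_plus smf_repr_times smf_repr_uminus smf_repr_inverse)

theorem theorem1:
  fixes P :: "'v mterm"
  shows "\<exists>Q. SMF Q \<and> mvars Q \<subseteq> mvars P \<and> md_eq P Q"
proof -
  obtain Q where "SMF Q" "mvars Q \<subseteq> mvars P" "ev Q = ev P"
    using smf_repr_ev[of P] unfolding smf_repr_def by blast
  then show ?thesis
    by (intro exI[of _ Q]) (simp add: md_eq_iff_ev)
qed

end
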